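(* Let $(V,E)$ be a finite graph (multiple edges allowed, no self-loops) whose vertex set is a disjoint union $V=V_\partial\sqcup V_b$, and let $V_\partial=A\sqcup B\sqcup C$. Consider configurations $\{\pi_v\}_{v\in V}$ with $\pi_v\in S_4$, subject to the boundary conditions $\pi_v=\pi^{(1)}=(12)(34)$ for $v\in A$, $\pi_v=\pi^{(2)}=(13)(24)$ for $v\in B$, and $\pi_v=\mathrm{id}$ for $v\in C$, with energy $E(\{\pi_v\})=\sum_{e=(vw)\in E}d(\pi_v,\pi_w)$. Then every such configuration satisfies $E(\{\pi_v\})\ge 2m$, where $m$ is the minimal size $|\gamma_{ABC}|$ of a tripartition for $A,B,C$. If moreover the minimal tripartition $(\Gamma_A,\Gamma_B,\Gamma_C)$ is unique, then equality $E(\{\pi_v\})=2m$ holds if and only if $\pi_v=\pi^{(1)}$ for all $v\in\Gamma_A$, $\pi_v=\pi^{(2)}$ for all $v\in\Gamma_B$, and $\pi_v=\mathrm{id}$ for all $v\in\Gamma_C$.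
   Context: The Cayley distance on $S_n$ is $d(\pi,\sigma)=n-|C(\pi^{-1}\sigma)|$, where $|C(\tau)|$ is the number of disjoint cycles of $\tau$ including fixed points. A tripartition for $A,B,C$ is a partition $V=\Gamma_A\sqcup\Gamma_B\sqcup\Gamma_C$ with $V_\partial\cap\Gamma_A=A$, $V_\partial\cap\Gamma_B=B$, $V_\partial\cap\Gamma_C=C$; its edge set $\gamma_{ABC}$ is the set of edges of $E$ whose endpoints lie in two different parts, and its size is $|\gamma_{ABC}|$. A tripartition is minimal if $|\gamma_{ABC}|$ is minimal among all tripartitions for $A,B,C$. *)

theory Defs
  imports "HOL-Combinatorics.Permutations"
begin

text \<open>Permutations of S_n are modelled as functions nat \<Rightarrow> nat that permute {1..n}.
  The cycles of tau (including fixed points) are its orbits on {1..n}.\<close>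

definition cycles_of :: "nat \<Rightarrow> (nat \<Rightarrow> nat) \<Rightarrow> nat set set" where
  "cycles_of n \<tau> = (\<lambda>x. {y. \<exists>k. (\<tau> ^^ k) x = y}) ` {1..n}"

definition num_cycles :: "nat \<Rightarrow> (nat \<Rightarrow> nat) \<Rightarrow> nat" where
  "num_cycles n \<tau> = card (cycles_of n \<tau>)"

definition cayley_dist :: "nat \<Rightarrow> (nat \<Rightarrow> nat) \<Rightarrow> (nat \<Rightarrow> nat) \<Rightarrow> nat" where
  "cayley_dist n \<pi> \<sigma> = n - num_cycles n (inv \<pi> \<circ> \<sigma>)"

definition pi1 :: "nat \<Rightarrow> nat" where
  "pi1 x = (if x = 1 then 2 else if x = 2 then 1 else if x = 3 then 4 else if x = 4 then 3 else x)"

definition pi2 :: "nat \<Rightarrow> nat" where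
  "pi2 x = (if x = 1 then 3 else if x = 3 then 1 else if x = 2 then 4 else if x = 4 then 2 else x)"

definition multigraph :: "'v set \<Rightarrow> 'e set \<Rightarrow> ('e \<Rightarrow> 'v \<times> 'v) \<Rightarrow> bool" where
  "multigraph V Ed ends \<longleftrightarrow> finite V \<and> finite Ed \<and>
     (\<forall>e\<in>Ed. fst (ends e) \<in> V \<and> snd (ends e) \<in> V \<and> fst (ends e) \<noteq> snd (ends e))"

definition energy :: "'e set \<Rightarrow> ('e \<Rightarrow> 'v \<times> 'v) \<Rightarrow> ('v \<Rightarrow> nat \<Rightarrow> nat) \<Rightarrow> nat" where
  "energy Ed ends \<pi> = (\<Sum>e\<in>Ed. cayley_dist 4 (\<pi> (fst (ends e))) (\<pi> (snd (ends e))))"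

definition tripartition ::
  "'v set \<Rightarrow> 'v set \<Rightarrow> 'v set \<Rightarrow> 'v set \<Rightarrow> 'v set \<Rightarrow> 'v set \<times> 'v set \<times> 'v set \<Rightarrow> bool" where
  "tripartition V Vd A B C T \<longleftrightarrow> (case T of (GA, GB, GC) \<Rightarrow>
     GA \<union> GB \<union> GC = V \<and> GA \<inter> GB = {} \<and> GA \<inter> GC = {} \<and> GB \<inter> GC = {} \<and>
     Vd \<inter> GA = A \<and> Vd \<inter> GB = B \<and> Vd \<inter> GC = C)"

definition same_part :: "'v set \<times> 'v set \<times> 'v set \<Rightarrow> 'v \<Rightarrow> 'v \<Rightarrow> bool" where
  "same_part T x y \<longleftrightarrow> (case T of (GA, GB, GC) \<Rightarrow>
     (x \<in> GA \<and> y \<in> GA) \<or> (x \<in> GB \<and> y \<in> GB) \<or> (x \<in> GC \<and> y \<in> GC))"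

definition cut_edges :: "'e set \<Rightarrow> ('e \<Rightarrow> 'v \<times> 'v) \<Rightarrow> 'v set \<times> 'v set \<times> 'v set \<Rightarrow> 'e set" where
  "cut_edges Ed ends T = {e \<in> Ed. \<not> same_part T (fst (ends e)) (snd (ends e))}"

definition min_tripartition_size ::
  "'v set \<Rightarrow> 'e set \<Rightarrow> ('e \<Rightarrow> 'v \<times> 'v) \<Rightarrow> 'v set \<Rightarrow> 'v set \<Rightarrow> 'v set \<Rightarrow> 'v set \<Rightarrow> nat" where
  "min_tripartition_size V Ed ends Vd A B C =
     Min {card (cut_edges Ed ends T) | T. tripartition V Vd A B C T}"

definition minimal_tripartition ::
  "'v set \<Rightarrow> 'e set \<Rightarrow> ('e \<Rightarrow> 'v \<times> 'v) \<Rightarrow> 'v set \<Rightarrow> 'v set \<Rightarrow> 'v set \<Rightarrow> 'v set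
     \<Rightarrow> 'v set \<times> 'v set \<times> 'v set \<Rightarrow> bool" where
  "minimal_tripartition V Ed ends Vd A B C T \<longleftrightarrow> tripartition V Vd A B C T \<and>
     (\<forall>T'. tripartition V Vd A B C T' \<longrightarrow> card (cut_edges Ed ends T) \<le> card (cut_edges Ed ends T'))"

end

theory Submission
  imports Defs "HOL-Combinatorics.Orbits"
begin

text \<open>For a point \<open>j \<in> {1..4}\<close>, the values \<open>\<pi> v j\<close> sort the vertices into a tripartition for
  \<open>A, B, C\<close>, because the boundary values \<open>pi1 j\<close>, \<open>pi2 j\<close> and \<open>j\<close> are distinct; its cut consists
  of edges whose endpoints disagree at \<open>j\<close>, so at least \<open>m\<close> edges disagree at each \<open>j\<close>. Summed over
  the four points this counts, for every edge \<open>vw\<close>, the points moved by \<open>inv (\<pi> v) \<circ> \<pi> w\<close>, which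
  is at most twice the Cayley distance since a non-trivial cycle moves at least two points. At equality every coordinate tripartition is minimal, so by uniqueness it is
  \<open>(\<Gamma>\<^sub>A, \<Gamma>\<^sub>B, \<Gamma>\<^sub>C)\<close>, and this determines every \<open>\<pi> v\<close>. Conversely \<open>pi1\<close>, \<open>pi2\<close> and \<open>id\<close> generate
  the Klein four-group, whose elements are involutions, so they are at Cayley distance at most 2
  and the configuration that is constant on the three parts has energy at most \<open>2m\<close>.\<close>

section \<open>Cycle counts and the Cayley distance\<close>

lemma cycles_of_eq_orbits:
  assumes "permutation \<tau>"
  shows "cycles_of n \<tau> = orbit \<tau> ` {1..n}"
  unfolding cycles_of_def orbit_altdef_permutation[OF assms] by blast

lemma orbit_eq_of_mem_orbit:
  assumes "permutation \<tau>" "y \<in> orbit \<tau> x"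
  shows "orbit \<tau> y = orbit \<tau> x"
  using orbit_cyclic_eq3[OF cyclic_on_orbit'[OF assms(1)] assms(2)] .

lemma orbits_disjoint:
  assumes "permutation \<tau>"
  shows "pairwise disjnt (orbit \<tau> ` S)"
proof (rule pairwise_imageI)
  fix x y assume "orbit \<tau> x \<noteq> orbit \<tau> y"
  then show "disjnt (orbit \<tau> x) (orbit \<tau> y)"
    unfolding disjnt_def using orbit_eq_of_mem_orbit[OF assms] by blast
qed

lemma orbit_subset_non_fixed:
  assumes "permutation \<tau>" "\<tau> x \<noteq> x"
  shows "orbit \<tau> x \<subseteq> {y. \<tau> y \<noteq> y}"
proof
  fix y assume y: "y \<in> orbit \<tau> x"
  from orbit_eq_of_mem_orbit[OF assms(1) y] show "y \<in> {y. \<tau> y \<noteq> y}"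
    using assms orbit_eq_singleton_iff[of \<tau> y] orbit.base[of \<tau> x] permutation_self_in_orbit[of \<tau> x]
    by auto
qed

lemma two_le_card_orbit:
  assumes "permutation \<tau>" "\<tau> x \<noteq> x"
  shows "2 \<le> card (orbit \<tau> x)"
proof -
  have "{x, \<tau> x} \<subseteq> orbit \<tau> x"
    by (simp add: permutation_self_in_orbit[OF assms(1)] orbit.base)
  moreover have "finite (orbit \<tau> x)"
    by (rule finite_orbit[OF permutation_self_in_orbit[OF assms(1)]])
  ultimately have "card {x, \<tau> x} \<le> card (orbit \<tau> x)" by (rule card_mono[rotated])
  then show ?thesis using assms(2) by simp
qed

lemma card_disjoint_family_le:
  assumes "finite M" "pairwise disjnt F" "\<And>X. X \<in> F \<Longrightarrow> X \<subseteq> M" "\<And>X. X \<in> F \<Longrightarrow> k \<le> card X"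
  shows "k * card F \<le> card M"
proof -
  have fin: "finite X" if "X \<in> F" for X by (rule finite_subset[OF assms(3)[OF that] assms(1)])
  have "k * card F = (\<Sum>X\<in>F. k)" by simp
  also have "\<dots> \<le> sum card F" by (rule sum_mono) (rule assms(4))
  also have "\<dots> = card (\<Union>F)" by (rule card_Union_disjoint[symmetric, OF assms(2) fin])
  also have "\<dots> \<le> card M" using assms(1,3) by (intro card_mono) auto
  finally show ?thesis .
qed

lemma num_cycles_moved_le:
  assumes "\<tau> permutes {1..n}"
  shows "2 * num_cycles n \<tau> + card {x\<in>{1..n}. \<tau> x \<noteq> x} \<le> 2 * n"
proof -
  have \<tau>: "permutation \<tau>" using assms permutation_permutes by blast
  define F where "F = {x\<in>{1..n}. \<tau> x = x}"
  define M where "M = {x\<in>{1..n}. \<tau> x \<noteq> x}"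
  have "cycles_of n \<tau> = orbit \<tau> ` F \<union> orbit \<tau> ` M"
    unfolding cycles_of_eq_orbits[OF \<tau>] F_def M_def by auto
  then have "num_cycles n \<tau> \<le> card (orbit \<tau> ` F) + card (orbit \<tau> ` M)"
    unfolding num_cycles_def by (simp add: card_Un_le)
  moreover have "card (orbit \<tau> ` F) \<le> card F"
    by (rule card_image_le) (simp add: F_def)
  moreover have "2 * card (orbit \<tau> ` M) \<le> card M"
  proof (rule card_disjoint_family_le)
    show "pairwise disjnt (orbit \<tau> ` M)" by (rule orbits_disjoint[OF \<tau>])
    show "X \<subseteq> M" and "2 \<le> card X" if "X \<in> orbit \<tau> ` M" for X
    proof -
      obtain x where x: "x \<in> {1..n}" "\<tau> x \<noteq> x" and X: "X = orbit \<tau> x"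
        using \<open>X \<in> orbit \<tau> ` M\<close> unfolding M_def by blast
      show "X \<subseteq> M"
        using permutes_orbit_subset[OF assms x(1)] orbit_subset_non_fixed[OF \<tau> x(2)]
        unfolding X M_def by blast
      show "2 \<le> card X" unfolding X by (rule two_le_card_orbit[OF \<tau> x(2)])
    qed
  qed (simp add: M_def)
  moreover have "card F + card M = n"
  proof -
    have "F \<union> M = {1..n}" "F \<inter> M = {}" "finite F" "finite M"
      unfolding F_def M_def by auto
    then show ?thesis using card_Un_disjoint[of F M] by simp
  qed
  ultimately show ?thesis unfolding M_def[symmetric] by linarith
qed

lemma card_disagree_le_cayley_dist:
  assumes "\<sigma> permutes {1..n}" "\<sigma>' permutes {1..n}"
  shows "card {j\<in>{1..n}. \<sigma> j \<noteq> \<sigma>' j} \<le> 2 * cayley_dist n \<sigma> \<sigma>'"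
proof -
  have \<tau>: "inv \<sigma> \<circ> \<sigma>' permutes {1..n}"
    using assms by (simp add: permutes_compose permutes_inv)
  have "(inv \<sigma> \<circ> \<sigma>') j \<noteq> j \<longleftrightarrow> \<sigma> j \<noteq> \<sigma>' j" for j
    using permutes_inverses[OF assms(1)] by (metis comp_apply)
  then have moved: "{j\<in>{1..n}. \<sigma> j \<noteq> \<sigma>' j} = {j\<in>{1..n}. (inv \<sigma> \<circ> \<sigma>') j \<noteq> j}"
    by simp
  show ?thesis
    using num_cycles_moved_le[OF \<tau>] unfolding moved cayley_dist_def by linarith
qed

lemma num_cycles_ge_of_involution:
  assumes "\<tau> \<circ> \<tau> = id"
  shows "n \<le> 2 * num_cycles n \<tau>"
proof -
  have funpow: "(\<tau> ^^ k) x \<in> {x, \<tau> x}" for k x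
    using assms by (induction k) (auto simp: fun_eq_iff)
  have small: "finite X \<and> card X \<le> 2" if X: "X \<in> cycles_of n \<tau>" for X
  proof -
    obtain x where x: "X = {y. \<exists>k. (\<tau> ^^ k) x = y}" using X unfolding cycles_of_def by blast
    have sub: "X \<subseteq> {x, \<tau> x}"
    proof
      fix y assume "y \<in> X"
      then obtain k where "y = (\<tau> ^^ k) x" unfolding x by blast
      then show "y \<in> {x, \<tau> x}" using funpow[of k x] by simp
    qed
    have "card {x, \<tau> x} \<le> 2" by (cases "\<tau> x = x") simp_all
    then show ?thesis using card_mono[OF _ sub] finite_subset[OF sub] by simp
  qed
  have cover: "{1..n} \<subseteq> \<Union> (cycles_of n \<tau>)"
  proof
    fix x assume "x \<in> {1..n}"
    moreover have "(\<tau> ^^ 0) x = x" by simp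
    ultimately show "x \<in> \<Union> (cycles_of n \<tau>)" unfolding cycles_of_def by blast
  qed
  have "finite (cycles_of n \<tau>)" unfolding cycles_of_def by simp
  then have "finite (\<Union> (cycles_of n \<tau>))" using small by blast
  have "n = card {1..n}" by simp
  also have "\<dots> \<le> card (\<Union> (cycles_of n \<tau>))" by (rule card_mono) fact+
  also have "\<dots> \<le> sum card (cycles_of n \<tau>)" by (rule card_Union_le_sum_card)
  also have "\<dots> \<le> (\<Sum>X\<in>cycles_of n \<tau>. 2)" by (rule sum_mono) (use small in blast)
  also have "\<dots> = 2 * num_cycles n \<tau>" unfolding num_cycles_def by simp
  finally show ?thesis .
qed

lemma twice_cayley_dist_le_of_involution:
  assumes "(inv \<sigma> \<circ> \<sigma>') \<circ> (inv \<sigma> \<circ> \<sigma>') = id"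
  shows "2 * cayley_dist n \<sigma> \<sigma>' \<le> n"
  using num_cycles_ge_of_involution[OF assms, of n] unfolding cayley_dist_def by linarith

lemma num_cycles_id: "num_cycles n id = n"
proof -
  have "cycles_of n id = (\<lambda>x. {x}) ` {1..n}" unfolding cycles_of_def by auto
  then show ?thesis unfolding num_cycles_def by (simp add: card_image)
qed

lemma cayley_dist_self: "\<sigma> permutes S \<Longrightarrow> cayley_dist n \<sigma> \<sigma> = 0"
  unfolding cayley_dist_def by (simp add: permutes_inv_o num_cycles_id)

lemma permutes_eqI:
  assumes "\<sigma> permutes S" "\<forall>j\<in>S. \<sigma> j = \<tau> j" "\<forall>j. j \<notin> S \<longrightarrow> \<tau> j = j"
  shows "\<sigma> = \<tau>"
  using assms permutes_not_in by fastforce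

lemma pi1_involution: "pi1 \<circ> pi1 = id"
  by (auto simp: fun_eq_iff pi1_def)

lemma pi2_involution: "pi2 \<circ> pi2 = id"
  by (auto simp: fun_eq_iff pi2_def)

lemma klein_cayley_dist_le:
  assumes "\<sigma> \<in> {pi1, pi2, id}" "\<sigma>' \<in> {pi1, pi2, id}"
  shows "cayley_dist 4 \<sigma> \<sigma>' \<le> 2"
proof -
  have "inv \<sigma> = \<sigma>"
    using assms(1) inv_unique_comp[OF pi1_involution pi1_involution]
      inv_unique_comp[OF pi2_involution pi2_involution] by auto
  moreover have "(\<sigma> \<circ> \<sigma>') \<circ> (\<sigma> \<circ> \<sigma>') = id"
    using assms by (auto simp: fun_eq_iff pi1_def pi2_def)
  ultimately show ?thesis using twice_cayley_dist_le_of_involution[of \<sigma> \<sigma>' 4] by simp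
qed

lemma klein_values_distinct:
  assumes "j \<in> {1..4::nat}"
  shows "pi1 j \<noteq> pi2 j" "pi1 j \<noteq> j" "pi2 j \<noteq> j"
proof -
  have "j = 1 \<or> j = 2 \<or> j = 3 \<or> j = 4" using assms by auto
  then show "pi1 j \<noteq> pi2 j" "pi1 j \<noteq> j" "pi2 j \<noteq> j" by (auto simp: pi1_def pi2_def)
qed

lemma klein_fixes_outside: "j \<notin> {1..4::nat} \<Longrightarrow> pi1 j = j \<and> pi2 j = j"
  by (auto simp: pi1_def pi2_def)

section \<open>Tripartitions\<close>

definition level_tripartition ::
  "'v set \<Rightarrow> ('v \<Rightarrow> 'a) \<Rightarrow> 'a set \<Rightarrow> 'a set \<Rightarrow> 'a set \<Rightarrow> 'v set \<times> 'v set \<times> 'v set" where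
  "level_tripartition V L SA SB SC = ({v\<in>V. L v \<in> SA}, {v\<in>V. L v \<in> SB}, {v\<in>V. L v \<in> SC})"

lemma tripartition_level_tripartition:
  assumes "Vd \<subseteq> V" "Vd = A \<union> B \<union> C"
    and "\<forall>v\<in>A. L v \<in> SA" "\<forall>v\<in>B. L v \<in> SB" "\<forall>v\<in>C. L v \<in> SC"
    and "SA \<inter> SB = {}" "SA \<inter> SC = {}" "SB \<inter> SC = {}" "SA \<union> SB \<union> SC = UNIV"
  shows "tripartition V Vd A B C (level_tripartition V L SA SB SC)"
  using assms unfolding tripartition_def level_tripartition_def by auto

lemma cut_edges_level_tripartition_subset:
  assumes "multigraph V Ed ends" "SA \<union> SB \<union> SC = UNIV"
  shows "cut_edges Ed ends (level_tripartition V L SA SB SC)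
    \<subseteq> {e\<in>Ed. L (fst (ends e)) \<noteq> L (snd (ends e))}"
  using assms unfolding cut_edges_def same_part_def multigraph_def level_tripartition_def by auto

lemma finite_cut_sizes:
  assumes "finite Ed"
  shows "finite {card (cut_edges Ed ends T) | T. tripartition V Vd A B C T}"
proof (rule finite_subset)
  show "{card (cut_edges Ed ends T) | T. tripartition V Vd A B C T} \<subseteq> {..card Ed}"
    using card_mono[OF assms] unfolding cut_edges_def by auto
qed simp

lemma min_tripartition_size_le:
  assumes "finite Ed" "tripartition V Vd A B C T"
  shows "min_tripartition_size V Ed ends Vd A B C \<le> card (cut_edges Ed ends T)"
  unfolding min_tripartition_size_def using assms(2) by (intro Min_le finite_cut_sizes assms(1)) blast

lemma minimal_tripartition_card_eq:
  assumes "finite Ed" "minimal_tripartition V Ed ends Vd A B C T"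
  shows "card (cut_edges Ed ends T) = min_tripartition_size V Ed ends Vd A B C"
proof -
  have T: "tripartition V Vd A B C T" using assms(2) unfolding minimal_tripartition_def by blast
  have "min_tripartition_size V Ed ends Vd A B C
      \<in> {card (cut_edges Ed ends T) | T. tripartition V Vd A B C T}"
    unfolding min_tripartition_size_def using T by (intro Min_in finite_cut_sizes assms(1)) blast+
  then have "card (cut_edges Ed ends T) \<le> min_tripartition_size V Ed ends Vd A B C"
    using assms(2) unfolding minimal_tripartition_def by auto
  with min_tripartition_size_le[OF assms(1) T, of ends] show ?thesis by simp
qed

lemma minimal_tripartitionI:
  assumes "finite Ed" "tripartition V Vd A B C T"
    and "card (cut_edges Ed ends T) \<le> min_tripartition_size V Ed ends Vd A B C"
  shows "minimal_tripartition V Ed ends Vd A B C T"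
  unfolding minimal_tripartition_def
proof (intro conjI allI impI)
  fix T' assume "tripartition V Vd A B C T'"
  from min_tripartition_size_le[OF assms(1) this, of ends]
  show "card (cut_edges Ed ends T) \<le> card (cut_edges Ed ends T')" using assms(3) by linarith
qed (rule assms(2))

lemma energy_le_of_constant_on_parts:
  assumes graph: "multigraph V Ed ends" and parts: "GA \<union> GB \<union> GC = V"
    and perm: "\<forall>v\<in>V. \<pi> v permutes {1..4}"
    and "\<forall>v\<in>GA. \<pi> v = \<sigma>A" "\<forall>v\<in>GB. \<pi> v = \<sigma>B" "\<forall>v\<in>GC. \<pi> v = \<sigma>C"
    and dist: "\<And>\<sigma> \<sigma>'. \<sigma> \<in> {\<sigma>A, \<sigma>B, \<sigma>C} \<Longrightarrow> \<sigma>' \<in> {\<sigma>A, \<sigma>B, \<sigma>C} \<Longrightarrow> cayley_dist 4 \<sigma> \<sigma>' \<le> k"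
  shows "energy Ed ends \<pi> \<le> k * card (cut_edges Ed ends (GA, GB, GC))"
proof -
  let ?cut = "cut_edges Ed ends (GA, GB, GC)"
  have finite: "finite Ed" using graph unfolding multigraph_def by blast
  have in_values: "\<pi> v \<in> {\<sigma>A, \<sigma>B, \<sigma>C}" if "v \<in> V" for v
    using that parts assms(4-6) by blast
  have edge: "cayley_dist 4 (\<pi> (fst (ends e))) (\<pi> (snd (ends e))) \<le> (if e \<in> ?cut then k else 0)"
    if e: "e \<in> Ed" for e
  proof -
    have ends: "fst (ends e) \<in> V" "snd (ends e) \<in> V" using graph e unfolding multigraph_def by auto
    show ?thesis
    proof (cases "e \<in> ?cut")
      case True
      then show ?thesis using dist[OF in_values[OF ends(1)] in_values[OF ends(2)]] by simp
    next
      case False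
      then have "\<pi> (fst (ends e)) = \<pi> (snd (ends e))"
        using e assms(4-6) unfolding cut_edges_def same_part_def by auto
      then show ?thesis using False cayley_dist_self[OF perm[rule_format, OF ends(2)]] by simp
    qed
  qed
  have "energy Ed ends \<pi> \<le> (\<Sum>e\<in>Ed. if e \<in> ?cut then k else 0)"
    unfolding energy_def by (rule sum_mono) (rule edge)
  also have "\<dots> = k * card ?cut"
  proof -
    have "Ed \<inter> ?cut = ?cut" unfolding cut_edges_def by blast
    then show ?thesis using finite by (simp add: sum.If_cases)
  qed
  finally show ?thesis .
qed

section \<open>Configurations with Klein four-group boundary values\<close>

locale klein_boundary_configuration =
  fixes V Vd A B C :: "'v set" and Ed :: "'e set" and ends :: "'e \<Rightarrow> 'v \<times> 'v"
    and \<pi> :: "'v \<Rightarrow> nat \<Rightarrow> nat"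
  assumes graph: "multigraph V Ed ends"
    and boundary_subset: "Vd \<subseteq> V"
    and boundary_split: "Vd = A \<union> B \<union> C"
    and perm: "\<forall>v\<in>V. \<pi> v permutes {1..4}"
    and boundary_A: "\<forall>v\<in>A. \<pi> v = pi1"
    and boundary_B: "\<forall>v\<in>B. \<pi> v = pi2"
    and boundary_C: "\<forall>v\<in>C. \<pi> v = id"
begin

abbreviation min_cut :: nat where
  "min_cut \<equiv> min_tripartition_size V Ed ends Vd A B C"

definition disagree_edges :: "nat \<Rightarrow> 'e set" where
  "disagree_edges j = {e\<in>Ed. \<pi> (fst (ends e)) j \<noteq> \<pi> (snd (ends e)) j}"

lemma finite_edges: "finite Ed"
  using graph unfolding multigraph_def by blast

lemma ends_in_vertices: "e \<in> Ed \<Longrightarrow> fst (ends e) \<in> V \<and> snd (ends e) \<in> V"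
  using graph unfolding multigraph_def by blast

lemma sum_card_disagree_edges_le_energy:
  "(\<Sum>j\<in>{1..4}. card (disagree_edges j)) \<le> 2 * energy Ed ends \<pi>"
proof -
  let ?R = "\<lambda>e j. \<pi> (fst (ends e)) j \<noteq> \<pi> (snd (ends e)) j"
  have "(\<Sum>j\<in>{1..4}. card (disagree_edges j)) = (\<Sum>e\<in>Ed. card {j\<in>{1..4::nat}. ?R e j})"
    unfolding disagree_edges_def card_eq_sum
    by (rule sum.swap_restrict) (simp_all add: finite_edges)
  also have "\<dots> \<le> (\<Sum>e\<in>Ed. 2 * cayley_dist 4 (\<pi> (fst (ends e))) (\<pi> (snd (ends e))))"
    by (rule sum_mono, rule card_disagree_le_cayley_dist) (use perm ends_in_vertices in auto)
  also have "\<dots> = 2 * energy Ed ends \<pi>"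
    unfolding energy_def by (simp add: sum_distrib_left)
  finally show ?thesis .
qed

text \<open>Values of \<open>\<pi> v j\<close> other than \<open>pi1 j\<close>, \<open>pi2 j\<close> and \<open>j\<close> are put into the first part by the
  first variant and into the second part by the second one; both are needed in the equality case,
  the first to determine \<open>\<Gamma>\<^sub>B\<close> and \<open>\<Gamma>\<^sub>C\<close>, the second to determine \<open>\<Gamma>\<^sub>A\<close>.\<close>

definition coord_tripartition_A :: "nat \<Rightarrow> 'v set \<times> 'v set \<times> 'v set" where
  "coord_tripartition_A j = level_tripartition V (\<lambda>v. \<pi> v j) (- {pi2 j, j}) {pi2 j} {j}"

definition coord_tripartition_B :: "nat \<Rightarrow> 'v set \<times> 'v set \<times> 'v set" where
  "coord_tripartition_B j = level_tripartition V (\<lambda>v. \<pi> v j) {pi1 j} (- {pi1 j, j}) {j}"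

lemma tripartition_coord_tripartitions:
  assumes "j \<in> {1..4}"
  shows "tripartition V Vd A B C (coord_tripartition_A j)"
    and "tripartition V Vd A B C (coord_tripartition_B j)"
  unfolding coord_tripartition_A_def coord_tripartition_B_def
  using klein_values_distinct[OF assms] boundary_A boundary_B boundary_C
  by (auto intro!: tripartition_level_tripartition[OF boundary_subset boundary_split])

lemma cut_edges_coord_tripartitions_subset:
  "cut_edges Ed ends (coord_tripartition_A j) \<subseteq> disagree_edges j"
  "cut_edges Ed ends (coord_tripartition_B j) \<subseteq> disagree_edges j"
  unfolding coord_tripartition_A_def coord_tripartition_B_def disagree_edges_def
  by (rule cut_edges_level_tripartition_subset[OF graph]; blast)+

lemma finite_disagree_edges: "finite (disagree_edges j)"
  unfolding disagree_edges_def using finite_edges by simp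

lemma min_cut_le_card_disagree_edges:
  assumes "j \<in> {1..4}"
  shows "min_cut \<le> card (disagree_edges j)"
proof -
  have "min_cut \<le> card (cut_edges Ed ends (coord_tripartition_A j))"
    by (rule min_tripartition_size_le[OF finite_edges tripartition_coord_tripartitions(1)[OF assms]])
  also have "\<dots> \<le> card (disagree_edges j)"
    by (rule card_mono[OF finite_disagree_edges cut_edges_coord_tripartitions_subset(1)])
  finally show ?thesis .
qed

theorem energy_lower_bound: "2 * min_cut \<le> energy Ed ends \<pi>"
proof -
  have "4 * min_cut = (\<Sum>j\<in>{1..4::nat}. min_cut)" by simp
  also have "\<dots> \<le> (\<Sum>j\<in>{1..4}. card (disagree_edges j))"
    by (rule sum_mono) (rule min_cut_le_card_disagree_edges)
  finally show ?thesis using sum_card_disagree_edges_le_energy by linarith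
qed

lemma card_disagree_edges_le_of_energy_eq:
  assumes energy: "energy Ed ends \<pi> = 2 * min_cut" and j: "j \<in> {1..4}"
  shows "card (disagree_edges j) \<le> min_cut"
proof -
  have "3 * min_cut = (\<Sum>i\<in>{1..4::nat} - {j}. min_cut)" using j by simp
  also have "\<dots> \<le> (\<Sum>i\<in>{1..4} - {j}. card (disagree_edges i))"
    by (rule sum_mono) (simp add: min_cut_le_card_disagree_edges)
  finally have "card (disagree_edges j) + 3 * min_cut \<le> (\<Sum>i\<in>{1..4}. card (disagree_edges i))"
    using sum.remove[of "{1..4::nat}" j "\<lambda>i. card (disagree_edges i)"] j by simp
  then show ?thesis using sum_card_disagree_edges_le_energy energy by linarith
qed

lemma unique_minimal_eq_coord_levels:
  assumes unique: "\<forall>T. minimal_tripartition V Ed ends Vd A B C T \<longrightarrow> T = (GA, GB, GC)"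
    and j: "j \<in> {1..4}" and disagree: "card (disagree_edges j) \<le> min_cut"
  shows "GA = {v\<in>V. \<pi> v j = pi1 j}" "GB = {v\<in>V. \<pi> v j = pi2 j}" "GC = {v\<in>V. \<pi> v j = j}"
proof -
  have "card (cut_edges Ed ends (coord_tripartition_A j)) \<le> min_cut"
    using card_mono[OF finite_disagree_edges cut_edges_coord_tripartitions_subset(1)[of j]] disagree
    by linarith
  moreover have "card (cut_edges Ed ends (coord_tripartition_B j)) \<le> min_cut"
    using card_mono[OF finite_disagree_edges cut_edges_coord_tripartitions_subset(2)[of j]] disagree
    by linarith
  ultimately have "minimal_tripartition V Ed ends Vd A B C (coord_tripartition_A j)"
    "minimal_tripartition V Ed ends Vd A B C (coord_tripartition_B j)"
    using minimal_tripartitionI[OF finite_edges] tripartition_coord_tripartitions[OF j] by blast+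
  then have "coord_tripartition_A j = (GA, GB, GC)" "coord_tripartition_B j = (GA, GB, GC)"
    using unique by blast+
  then show "GA = {v\<in>V. \<pi> v j = pi1 j}" "GB = {v\<in>V. \<pi> v j = pi2 j}" "GC = {v\<in>V. \<pi> v j = j}"
    unfolding coord_tripartition_A_def coord_tripartition_B_def level_tripartition_def by auto
qed

lemma configuration_of_energy_eq:
  assumes unique: "\<forall>T. minimal_tripartition V Ed ends Vd A B C T \<longrightarrow> T = (GA, GB, GC)"
    and energy: "energy Ed ends \<pi> = 2 * min_cut"
  shows "(\<forall>v\<in>GA. \<pi> v = pi1) \<and> (\<forall>v\<in>GB. \<pi> v = pi2) \<and> (\<forall>v\<in>GC. \<pi> v = id)"
proof -
  have levels: "GA = {v\<in>V. \<pi> v j = pi1 j}" "GB = {v\<in>V. \<pi> v j = pi2 j}"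
    "GC = {v\<in>V. \<pi> v j = id j}" if j: "j \<in> {1..4}" for j
    using unique_minimal_eq_coord_levels[OF unique j card_disagree_edges_le_of_energy_eq[OF energy j]]
    by simp_all
  have agree: "\<pi> v = \<sigma>"
    if v: "v \<in> G" and G: "\<And>j. j \<in> {1..4} \<Longrightarrow> G = {v\<in>V. \<pi> v j = \<sigma> j}"
      and \<sigma>: "\<sigma> \<in> {pi1, pi2, id}" for v G \<sigma>
  proof (rule permutes_eqI[OF perm[rule_format]])
    show "v \<in> V" using v G[of 1] by simp
    show "\<forall>j\<in>{1..4}. \<pi> v j = \<sigma> j" using v G by blast
    show "\<forall>j. j \<notin> {1..4} \<longrightarrow> \<sigma> j = j" using \<sigma> klein_fixes_outside by auto
  qed
  show ?thesis using agree[OF _ levels(1)] agree[OF _ levels(2)] agree[OF _ levels(3)] by blast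
qed

lemma energy_eq_of_configuration:
  assumes minimal: "minimal_tripartition V Ed ends Vd A B C (GA, GB, GC)"
    and config: "(\<forall>v\<in>GA. \<pi> v = pi1) \<and> (\<forall>v\<in>GB. \<pi> v = pi2) \<and> (\<forall>v\<in>GC. \<pi> v = id)"
  shows "energy Ed ends \<pi> = 2 * min_cut"
proof -
  have "GA \<union> GB \<union> GC = V"
    using minimal unfolding minimal_tripartition_def tripartition_def by blast
  then have "energy Ed ends \<pi> \<le> 2 * card (cut_edges Ed ends (GA, GB, GC))"
    using config by (intro energy_le_of_constant_on_parts[OF graph _ perm]) (auto intro: klein_cayley_dist_le)
  then show ?thesis
    using minimal_tripartition_card_eq[OF finite_edges minimal] energy_lower_bound by linarith
qed

end

theorem mainTheorem6:
  fixes V Vd Vb A B C :: "'v set" and Ed :: "'e set" and ends :: "'e \<Rightarrow> 'v \<times> 'v"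
    and \<pi> :: "'v \<Rightarrow> nat \<Rightarrow> nat"
  assumes graph: "multigraph V Ed ends"
    and Vsplit: "V = Vd \<union> Vb" "Vd \<inter> Vb = {}"
    and Vdsplit: "Vd = A \<union> B \<union> C" "A \<inter> B = {}" "A \<inter> C = {}" "B \<inter> C = {}"
    and perm: "\<forall>v\<in>V. \<pi> v permutes {1..4}"
    and bA: "\<forall>v\<in>A. \<pi> v = pi1"
    and bB: "\<forall>v\<in>B. \<pi> v = pi2"
    and bC: "\<forall>v\<in>C. \<pi> v = id"
  shows "energy Ed ends \<pi> \<ge> 2 * min_tripartition_size V Ed ends Vd A B C
    \<and> (\<forall>GA GB GC. minimal_tripartition V Ed ends Vd A B C (GA, GB, GC) \<and>
          (\<forall>T. minimal_tripartition V Ed ends Vd A B C T \<longrightarrow> T = (GA, GB, GC)) \<longrightarrow>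
        (energy Ed ends \<pi> = 2 * min_tripartition_size V Ed ends Vd A B C \<longleftrightarrow>
          (\<forall>v\<in>GA. \<pi> v = pi1) \<and> (\<forall>v\<in>GB. \<pi> v = pi2) \<and> (\<forall>v\<in>GC. \<pi> v = id)))"
proof -
  have "Vd \<subseteq> V" using Vsplit(1) by blast
  then interpret klein_boundary_configuration V Vd A B C Ed ends \<pi>
    using graph Vdsplit(1) perm bA bB bC by unfold_locales
  show ?thesis
  proof (intro conjI allI impI)
    show "2 * min_cut \<le> energy Ed ends \<pi>" by (rule energy_lower_bound)
    fix GA GB GC
    assume unique_minimal: "minimal_tripartition V Ed ends Vd A B C (GA, GB, GC) \<and>
      (\<forall>T. minimal_tripartition V Ed ends Vd A B C T \<longrightarrow> T = (GA, GB, GC))"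
    show "energy Ed ends \<pi> = 2 * min_cut \<longleftrightarrow>
        (\<forall>v\<in>GA. \<pi> v = pi1) \<and> (\<forall>v\<in>GB. \<pi> v = pi2) \<and> (\<forall>v\<in>GC. \<pi> v = id)"
      using configuration_of_energy_eq[OF conjunct2[OF unique_minimal]]
        energy_eq_of_configuration[OF conjunct1[OF unique_minimal]] ..
  qed
qed

end
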